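(* Every tree (in which every nontrivial pseudo-supremum is a supremum) that is $\mathbb{R}$-special and collectionwise Hausdorff in the interval topology is perfect, i.e. every closed subset is a $G_\delta$.
   Context: A tree is a partially ordered set in which the set of predecessors of each element is well-ordered. For a nonempty chain bounded above, its pseudo-supremum is the set of its minimal upper bounds; standing assumption: each such set is a singleton. A tree $T$ is $\mathbb{R}$-special if there is a function $f\colon T\to\mathbb{R}$ with $p<q\Rightarrow f(p)<f(q)$. The interval topology has as base all sets $(s,t]=\{x:s<x\le t\}$ together with all singletons $\{t\}$ with $t$ minimal. Collectionwise Hausdorff: every closed discrete set $D$ expands to a pairwise disjoint family of open sets $\{U_d:d\in D\}$ with $d\in U_d$. *)

theory Defs
  imports "HOL-Analysis.Analysis"
begin

definition is_tree :: "'a::order itself \<Rightarrow> bool" where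
  "is_tree _ \<longleftrightarrow> (\<forall>t::'a. (\<forall>x y. x < t \<and> y < t \<longrightarrow> x \<le> y \<or> y \<le> x) \<and>
                     (\<forall>S. S \<noteq> {} \<and> S \<subseteq> {s. s < t} \<longrightarrow> (\<exists>m\<in>S. \<forall>s\<in>S. m \<le> s)))"

definition is_chain_ord :: "'a::order set \<Rightarrow> bool" where
  "is_chain_ord C \<longleftrightarrow> (\<forall>x\<in>C. \<forall>y\<in>C. x \<le> y \<or> y \<le> x)"

definition pseudo_sup :: "'a::order set \<Rightarrow> 'a set" where
  "pseudo_sup C = {u. (\<forall>c\<in>C. c \<le> u) \<and> \<not> (\<exists>v. (\<forall>c\<in>C. c \<le> v) \<and> v < u)}"

definition pseudo_sups_are_sups :: "'a::order itself \<Rightarrow> bool" where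
  "pseudo_sups_are_sups _ \<longleftrightarrow> (\<forall>C::'a set. C \<noteq> {} \<and> is_chain_ord C \<and> (\<exists>b. \<forall>c\<in>C. c \<le> b)
      \<longrightarrow> (\<exists>u. pseudo_sup C = {u}))"

definition R_special :: "'a::order itself \<Rightarrow> bool" where
  "R_special _ \<longleftrightarrow> (\<exists>f::'a \<Rightarrow> real. \<forall>p q. p < q \<longrightarrow> f p < f q)"

definition interval_topology :: "'a::order topology" where
  "interval_topology = topology_generated_by
     ({ {x. s < x \<and> x \<le> t} | s t. True } \<union> { {t} | t. \<forall>x. \<not> x < t })"

definition collectionwise_hausdorff :: "'a topology \<Rightarrow> bool" where
  "collectionwise_hausdorff X \<longleftrightarrow>
     (\<forall>D. closedin X D \<and> (\<forall>d\<in>D. \<exists>U. openin X U \<and> U \<inter> D = {d}) \<longrightarrow>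
        (\<exists>U. (\<forall>d\<in>D. openin X (U d) \<and> d \<in> U d) \<and>
             (\<forall>d\<in>D. \<forall>e\<in>D. d \<noteq> e \<longrightarrow> U d \<inter> U e = {})))"

definition perfect_space :: "'a topology \<Rightarrow> bool" where
  "perfect_space X \<longleftrightarrow> (\<forall>C. closedin X C \<longrightarrow> gdelta_in X C)"

end

theory Submission
  imports Defs
begin

(*
  Fix a strictly increasing f : T -> real and a closed set C.  If C is not cofinal below a node a,
  then all points of C below a lie under a least node gap_floor C a.  The points a of C with
  f a - f (gap_floor C a) > delta form a closed discrete set, because f grows by more than delta
  between any two of them on a branch; collectionwise Hausdorffness separates these sets by
  disjoint open families U_n (delta = 1/(n+1)).  The k-th open superset of C consists of the
  isolated points of C and, for each limit node c in C, an interval (b, c] with f b within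
  1/(k+1) of sup f below c, cut down by U_j(c) for j <= k.  Suppose x is not in C but lies in all
  of them, via nodes c_k > x.  Only finitely many c_k have C cofinal below them: their bases lie
  in C, hence below a C-free interval (r, x], which bounds f b away from f x.  The remaining c_k
  share their gap floor with x, so eventually they all lie in one discrete set and the
  disjointness of U_n makes c_k eventually constant; its bases then eventually pass x.
*)

lemma tree_less_comparable:
  assumes "is_tree TYPE('a::order)" "x < t" "y < (t::'a)"
  shows "x \<le> y \<or> y \<le> x"
  using assms unfolding is_tree_def by blast

lemma tree_not_less_imp_le:
  assumes "is_tree TYPE('a::order)" "x < t" "y < (t::'a)" "\<not> x < y"
  shows "y \<le> x"
  using tree_less_comparable[OF assms(1-3)] assms(4) by (auto simp: order.order_iff_strict)

lemma tree_has_least: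
  assumes "is_tree TYPE('a::order)" "S \<noteq> {}" "S \<subseteq> {..<t::'a}"
  shows "\<exists>m\<in>S. \<forall>s\<in>S. m \<le> s"
  using assms unfolding is_tree_def lessThan_def by blast

lemma topspace_interval_topology [simp]: "topspace (interval_topology :: 'a::order topology) = UNIV"
proof -
  have "x \<in> \<Union>({{x. s < x \<and> x \<le> t} | s t. True} \<union> {{t} | t. \<forall>x. \<not> x < t})" for x :: 'a
  proof (cases "\<exists>s. s < x")
    case True
    then obtain s where "x \<in> {y. s < y \<and> y \<le> x}" by auto
    then show ?thesis by blast
  qed blast
  then show ?thesis
    unfolding interval_topology_def topology_generated_by_topspace by blast
qed

lemma openin_interval_topology_ioc: "openin interval_topology {s<..t}"
  unfolding interval_topology_def greaterThanAtMost_def greaterThan_def atMost_def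
  by (rule topology_generated_by_Basis) blast

lemma openin_interval_topology_minimal: "(\<And>x. \<not> x < t) \<Longrightarrow> openin interval_topology {t}"
  unfolding interval_topology_def by (rule topology_generated_by_Basis) blast

lemma openin_interval_topology_UNIV [simp]: "openin interval_topology UNIV"
  by (metis openin_topspace topspace_interval_topology)

lemma closedin_interval_topology: "closedin interval_topology C \<longleftrightarrow> openin interval_topology (- C)"
  by (simp add: closedin_def Compl_eq_Diff_UNIV)

lemma openin_interval_topology_contains_ioc:
  assumes tree: "is_tree TYPE('a::order)" and "openin interval_topology U"
    and "y \<in> U" "s0 < (y::'a)"
  shows "\<exists>s<y. {s<..y} \<subseteq> U"
proof -
  let ?B = "{{x. s < x \<and> x \<le> t} | s t. True} \<union> {{t} | t. \<forall>x::'a. \<not> x < t}"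
  have "generate_topology_on ?B U"
    using assms(2) unfolding interval_topology_def by (rule openin_topology_generated_by)
  then have "\<forall>y\<in>U. (\<exists>s. s < y) \<longrightarrow> (\<exists>s<y. {s<..y} \<subseteq> U)"
  proof (induction rule: generate_topology_on.induct)
    case (Int a b)
    show ?case
    proof (intro ballI impI)
      fix y assume "y \<in> a \<inter> b" "\<exists>s. s < y"
      then obtain s1 s2 where s: "s1 < y" "{s1<..y} \<subseteq> a" "s2 < y" "{s2<..y} \<subseteq> b"
        using Int.IH by blast
      show "\<exists>s<y. {s<..y} \<subseteq> a \<inter> b"
      proof (cases "s1 \<le> s2")
        case True
        then have "{s2<..y} \<subseteq> {s1<..y}" by (auto intro: le_less_trans)
        with s show ?thesis by blast
      next
        case False
        then have "{s1<..y} \<subseteq> {s2<..y}"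
          using tree_less_comparable[OF tree s(1) s(3)] by (auto intro: le_less_trans)
        with s show ?thesis by blast
      qed
    qed
  next
    case (Basis V)
    then show ?case by (auto 0 4 intro: order.strict_trans2)
  qed blast+
  then show ?thesis using assms(3,4) by blast
qed

definition limit_node :: "'a::order \<Rightarrow> bool" where
  "limit_node a \<longleftrightarrow> (\<exists>s. s < a) \<and> (\<forall>p<a. \<exists>z. p < z \<and> z < a)"

lemma openin_interval_topology_non_limit:
  assumes "\<not> limit_node a"
  shows "openin interval_topology {a}"
proof (cases "\<exists>s. s < a")
  case True
  then obtain p where "p < a" "\<not> (\<exists>z. p < z \<and> z < a)"
    using assms unfolding limit_node_def by blast
  then have "{p<..a} = {a}" by (auto simp: order.order_iff_strict)
  then show ?thesis by (metis openin_interval_topology_ioc)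
qed (auto intro: openin_interval_topology_minimal)

definition cofinal_below :: "'a::order set \<Rightarrow> 'a \<Rightarrow> bool" where
  "cofinal_below C a \<longleftrightarrow> (\<forall>z<a. \<exists>c\<in>C. z \<le> c \<and> c < a)"

(* Junk (LEAST of an empty set) when C is cofinal below a. *)
definition gap_floor :: "'a::order set \<Rightarrow> 'a \<Rightarrow> 'a" where
  "gap_floor C a = (LEAST z. z < a \<and> (\<forall>c\<in>C. c < a \<longrightarrow> c < z))"

context
  assumes tree: "is_tree TYPE('a::order)"
begin

lemma gap_floor:
  fixes C :: "'a set"
  assumes "\<not> cofinal_below C a"
  shows gap_floor_less: "gap_floor C a < a"
    and less_gap_floor: "c \<in> C \<Longrightarrow> c < a \<Longrightarrow> c < gap_floor C a"
    and gap_floor_le: "z < a \<Longrightarrow> \<forall>c\<in>C. c < a \<longrightarrow> c < z \<Longrightarrow> gap_floor C a \<le> z"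
proof -
  let ?G = "{z. z < a \<and> (\<forall>c\<in>C. c < a \<longrightarrow> c < z)}"
  obtain z where "z < a" "\<forall>c\<in>C. c < a \<longrightarrow> \<not> z \<le> c"
    using assms unfolding cofinal_below_def by blast
  then have "z \<in> ?G" using tree_not_less_imp_le[OF tree] by blast
  then obtain m where m: "m \<in> ?G" "\<forall>y\<in>?G. m \<le> y"
    using tree_has_least[OF tree, of ?G a] by blast
  then have "gap_floor C a = m"
    unfolding gap_floor_def by (intro Least_equality) auto
  with m show "gap_floor C a < a" "c \<in> C \<Longrightarrow> c < a \<Longrightarrow> c < gap_floor C a"
    "z < a \<Longrightarrow> \<forall>c\<in>C. c < a \<longrightarrow> c < z \<Longrightarrow> gap_floor C a \<le> z" for c z
    by auto
qed

lemma gap_floor_eq: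
  fixes C :: "'a set"
  assumes a: "\<not> cofinal_below C a" and x: "gap_floor C a < x" "x \<le> a"
  shows "\<not> cofinal_below C x \<and> gap_floor C x = gap_floor C a"
proof -
  have below: "c < x \<longleftrightarrow> c < a" if "c \<in> C" for c
    using less_gap_floor[OF a that] x by (auto dest: less_trans less_le_trans)
  have "gap_floor C x = gap_floor C a"
    unfolding gap_floor_def[of C x]
    by (rule Least_equality) (use a x below gap_floor_le[OF a] less_gap_floor[OF a] in auto)
  moreover have "\<not> cofinal_below C x"
    unfolding cofinal_below_def using x below less_gap_floor[OF a]
    by (metis leD)
  ultimately show ?thesis by blast
qed

end

lemma eventually_inverse_Suc_less:
  "\<epsilon> > 0 \<Longrightarrow> \<forall>\<^sub>F k in sequentially. inverse (real (Suc k)) < \<epsilon>"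
  using order_tendstoD(2)[OF LIMSEQ_inverse_real_of_nat] .

definition disjoint_open_expansion :: "'a topology \<Rightarrow> 'a set \<Rightarrow> ('a \<Rightarrow> 'a set) \<Rightarrow> bool" where
  "disjoint_open_expansion X D V \<longleftrightarrow>
     (\<forall>d\<in>D. openin X (V d) \<and> d \<in> V d) \<and> (\<forall>d\<in>D. \<forall>e\<in>D. d \<noteq> e \<longrightarrow> V d \<inter> V e = {})"

lemma collectionwise_hausdorffD:
  assumes "collectionwise_hausdorff X" "closedin X D"
    and "\<And>d. d \<in> D \<Longrightarrow> \<exists>U. openin X U \<and> U \<inter> D = {d}"
  shows "\<exists>V. disjoint_open_expansion X D V"
  using assms unfolding collectionwise_hausdorff_def disjoint_open_expansion_def by blast

locale special_tree =
  fixes f :: "'a::order \<Rightarrow> real"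
  assumes tree: "is_tree TYPE('a)"
    and f_less: "p < q \<Longrightarrow> f p < f q"
begin

lemma f_le: "p \<le> q \<Longrightarrow> f p \<le> f q"
  using f_less by (cases "p = q") (auto simp: order.order_iff_strict)

definition pred_sup :: "'a \<Rightarrow> real" where
  "pred_sup a = Sup (f ` {..<a})"

lemma pred_sup:
  assumes "limit_node a"
  shows less_pred_sup: "z < a \<Longrightarrow> f z < pred_sup a"
    and pred_sup_approx: "\<epsilon> > 0 \<Longrightarrow> \<exists>z<a. pred_sup a - \<epsilon> < f z"
proof -
  have bdd: "bdd_above (f ` {..<a})"
    by (rule bdd_aboveI[of _ "f a"]) (auto intro: less_imp_le f_less)
  show "f z < pred_sup a" if z: "z < a" for z
  proof -
    obtain z' where "z < z'" "z' < a"
      using assms z unfolding limit_node_def by blast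
    then show ?thesis
      using f_less[of z z'] cSup_upper[OF _ bdd, of "f z'"] unfolding pred_sup_def by auto
  qed
  have ne: "f ` {..<a} \<noteq> {}" using assms unfolding limit_node_def by auto
  show "\<exists>z<a. pred_sup a - \<epsilon> < f z" if "\<epsilon> > 0" for \<epsilon>
  proof -
    have "pred_sup a - \<epsilon> < Sup (f ` {..<a})" using that unfolding pred_sup_def by simp
    from less_cSupD[OF ne this] show ?thesis by auto
  qed
qed

definition nbhd_base :: "'a set \<Rightarrow> real \<Rightarrow> 'a \<Rightarrow> 'a" where
  "nbhd_base C \<epsilon> c = (SOME b. b < c \<and> pred_sup c - \<epsilon> < f b \<and>
     (cofinal_below C c \<longrightarrow> b \<in> C) \<and> (\<not> cofinal_below C c \<longrightarrow> gap_floor C c \<le> b))"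

lemma nbhd_base:
  fixes C :: "'a set"
  assumes "limit_node c" "\<epsilon> > 0"
  defines "b \<equiv> nbhd_base C \<epsilon> c"
  shows "b < c \<and> pred_sup c - \<epsilon> < f b \<and>
    (cofinal_below C c \<longrightarrow> b \<in> C) \<and> (\<not> cofinal_below C c \<longrightarrow> gap_floor C c \<le> b)"
proof -
  obtain z where z: "z < c" "pred_sup c - \<epsilon> < f z"
    using pred_sup_approx[OF assms(1,2)] by blast
  have "\<exists>b. b < c \<and> pred_sup c - \<epsilon> < f b \<and>
    (cofinal_below C c \<longrightarrow> b \<in> C) \<and> (\<not> cofinal_below C c \<longrightarrow> gap_floor C c \<le> b)"
  proof (cases "cofinal_below C c")
    case True
    then obtain b where "b \<in> C" "z \<le> b" "b < c"
      using z unfolding cofinal_below_def by blast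
    with True z f_le[of z b] show ?thesis by (intro exI[of _ b]) auto
  next
    case False
    let ?g = "gap_floor C c"
    have "?g < c" using gap_floor_less[OF tree False] .
    with z tree_less_comparable[OF tree] have "z \<le> ?g \<or> ?g \<le> z" by blast
    with False z \<open>?g < c\<close> f_le[of z ?g] show ?thesis
      by (intro exI[of _ "if z \<le> ?g then ?g else z"]) auto
  qed
  then show ?thesis unfolding b_def nbhd_base_def by (rule someI_ex)
qed

definition jumps :: "'a set \<Rightarrow> real \<Rightarrow> 'a set" where
  "jumps C \<delta> = {a \<in> C. \<not> cofinal_below C a \<and> \<delta> < f a - f (gap_floor C a)}"

lemma jumps_separated:
  assumes "d \<in> jumps C \<delta>" "e \<in> jumps C \<delta>" "d < e"
  shows "f d + \<delta> < f e"
proof -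
  have "d < gap_floor C e"
    using assms less_gap_floor[OF tree] unfolding jumps_def by blast
  with f_less assms(2) show ?thesis unfolding jumps_def by force
qed

lemma jumps_isolated:
  assumes "d \<in> jumps C \<delta>"
  shows "{gap_floor C d<..d} \<inter> jumps C \<delta> = {d}"
proof -
  have d: "d \<in> C" "\<not> cofinal_below C d" using assms unfolding jumps_def by auto
  have "z = d" if "z \<in> jumps C \<delta>" "gap_floor C d < z" "z \<le> d" for z
  proof (rule ccontr)
    assume "z \<noteq> d"
    with that have "z < gap_floor C d"
      using less_gap_floor[OF tree d(2)] unfolding jumps_def by auto
    with that(2) show False by simp
  qed
  with assms gap_floor_less[OF tree d(2)] show ?thesis by auto
qed

lemma closedin_jumps:
  assumes "\<delta> > 0"
  shows "closedin interval_topology (jumps C \<delta>)"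
  unfolding closedin_interval_topology openin_subopen[of _ "- jumps C \<delta>"]
proof
  fix y assume y: "y \<in> - jumps C \<delta>"
  show "\<exists>T. openin interval_topology T \<and> y \<in> T \<and> T \<subseteq> - jumps C \<delta>"
  proof (cases "\<exists>s. s < y")
    case False
    with y show ?thesis using openin_interval_topology_minimal[of y] by blast
  next
    case True
    show ?thesis
    proof (rule ccontr)
      assume no_nbhd: "\<not> ?thesis"
      have cofinal: "\<exists>e\<in>jumps C \<delta>. s < e \<and> e < y" if "s < y" for s
      proof -
        have "\<not> {s<..y} \<subseteq> - jumps C \<delta>"
          using no_nbhd openin_interval_topology_ioc[of s y] that by auto
        then obtain e where "e \<in> jumps C \<delta>" "s < e" "e \<le> y" by auto
        with y show ?thesis by (auto simp: order.order_iff_strict)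
      qed
      let ?S = "f ` (jumps C \<delta> \<inter> {..<y})"
      have "?S \<noteq> {}" using cofinal True by blast
      then obtain e where e: "e \<in> jumps C \<delta>" "e < y" "Sup ?S - \<delta> < f e"
        using less_cSupD[of ?S "Sup ?S - \<delta>"] assms by auto
      obtain e' where e': "e' \<in> jumps C \<delta>" "e < e'" "e' < y"
        using cofinal[OF e(2)] by blast
      have "bdd_above ?S"
        by (rule bdd_aboveI[of _ "f y"]) (auto intro: less_imp_le f_less)
      then have "f e' \<le> Sup ?S" using e' by (auto intro: cSup_upper)
      with e e' jumps_separated[of e C \<delta> e'] show False by linarith
    qed
  qed
qed

lemma cofinal_nbhd_coarse:
  assumes "closedin interval_topology C" "x \<notin> C"
  obtains \<epsilon> where "\<epsilon> > 0"
    "\<And>c \<epsilon>'. limit_node c \<Longrightarrow> cofinal_below C c \<Longrightarrow> \<epsilon>' > 0 \<Longrightarrow>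
      nbhd_base C \<epsilon>' c < x \<Longrightarrow> x < c \<Longrightarrow> \<epsilon> < \<epsilon>'"
proof (cases "\<exists>b\<in>C. b < x")
  case True
  then obtain b0 where "b0 < x" by blast
  then obtain r where r: "r < x" "{r<..x} \<subseteq> - C"
    using openin_interval_topology_contains_ioc[OF tree _ _ \<open>b0 < x\<close>] assms
    unfolding closedin_interval_topology by blast
  have below_r: "f b \<le> f r" if "b \<in> C" "b < x" for b
  proof -
    have "\<not> r < b" using r(2) that by (auto simp: subset_iff)
    then show ?thesis using tree_not_less_imp_le[OF tree r(1) that(2)] f_le by blast
  qed
  show ?thesis
  proof (rule that[of "f x - f r"])
    show "f x - f r > 0" using f_less[OF r(1)] by simp
    fix c \<epsilon>' assume c: "limit_node c" "cofinal_below C c" "\<epsilon>' > 0"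
      and x: "nbhd_base C \<epsilon>' c < x" "x < c"
    have "nbhd_base C \<epsilon>' c \<in> C" "pred_sup c - \<epsilon>' < f (nbhd_base C \<epsilon>' c)"
      using nbhd_base[OF c(1,3), of C] c(2) by auto
    with below_r[OF _ x(1)] less_pred_sup[OF c(1) x(2)]
    show "f x - f r < \<epsilon>'" by linarith
  qed
next
  case False
  show ?thesis
    by (rule that[of 1]) (use False nbhd_base in auto)
qed

lemma mem_jumps_if_gap_floor_less:
  assumes "c \<in> C" "\<not> cofinal_below C c" "gap_floor C c < x" "x \<le> c"
    and "\<delta> < f x - f (gap_floor C x)"
  shows "c \<in> jumps C \<delta>"
  using assms gap_floor_eq[OF tree assms(2-4)] f_le[OF assms(4)] unfolding jumps_def by auto

definition nbhd :: "'a set \<Rightarrow> (nat \<Rightarrow> 'a \<Rightarrow> 'a set) \<Rightarrow> nat \<Rightarrow> 'a \<Rightarrow> 'a set" where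
  "nbhd C U k c = (if limit_node c
     then {nbhd_base C (inverse (real (Suc k))) c<..c} \<inter>
       (\<Inter>j\<le>k. if c \<in> jumps C (inverse (real (Suc j))) then U j c else UNIV)
     else {c})"

lemma mem_nbhdD:
  assumes "x \<in> nbhd C U k c" "x \<noteq> c"
  shows "limit_node c" "nbhd_base C (inverse (real (Suc k))) c < x" "x < c"
    and "j \<le> k \<Longrightarrow> c \<in> jumps C (inverse (real (Suc j))) \<Longrightarrow> x \<in> U j c"
  using assms unfolding nbhd_def by (auto simp: order.order_iff_strict split: if_splits)

lemma nbhd_seq_eventually_const:
  fixes C :: "'a set" and U :: "nat \<Rightarrow> 'a \<Rightarrow> 'a set"
  assumes closed: "closedin interval_topology C"
    and U: "\<And>n. disjoint_open_expansion interval_topology (jumps C (inverse (real (Suc n)))) (U n)"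
    and x: "x \<notin> C" and c: "\<And>k. c k \<in> C" "\<And>k. x \<in> nbhd C U k (c k)"
  shows "\<exists>k1. \<forall>k\<ge>k1. c k = c k1"
proof -
  let ?\<delta> = "\<lambda>k. inverse (real (Suc k))"
  have x_ne: "x \<noteq> c k" for k using x c(1) by metis
  note lim = mem_nbhdD(1)[OF c(2) x_ne] and x_in = mem_nbhdD(2,3)[OF c(2) x_ne]
  obtain \<epsilon> where "\<epsilon> > 0" and coarse_nbhds: "\<And>c \<epsilon>'. limit_node c \<Longrightarrow> cofinal_below C c \<Longrightarrow>
      \<epsilon>' > 0 \<Longrightarrow> nbhd_base C \<epsilon>' c < x \<Longrightarrow> x < c \<Longrightarrow> \<epsilon> < \<epsilon>'"
    using cofinal_nbhd_coarse[OF closed x] by blast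
  have "\<forall>\<^sub>F k in sequentially. \<not> cofinal_below C (c k)"
    using eventually_inverse_Suc_less[OF \<open>\<epsilon> > 0\<close>]
    by eventually_elim (use coarse_nbhds[OF lim _ _ x_in] in force)
  then obtain k0 where k0: "\<And>k. k \<ge> k0 \<Longrightarrow> \<not> cofinal_below C (c k)"
    unfolding eventually_sequentially by blast
  have floor_less: "gap_floor C (c k) < x" if "k \<ge> k0" for k
    using nbhd_base[OF lim[of k], of "?\<delta> k" C] k0[OF that] x_in(1)[of k] by auto
  have "\<not> cofinal_below C x"
    using gap_floor_eq[OF tree k0 floor_less, of k0] x_in(2)[of k0] by auto
  then have "f (gap_floor C x) < f x" using gap_floor_less[OF tree] f_less by blast
  then obtain M where M: "?\<delta> M < f x - f (gap_floor C x)"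
    using eventually_inverse_Suc_less
    by (metis diff_gt_0_iff_gt eventually_sequentially order_refl)
  define k1 where "k1 = max k0 M"
  have jump: "c k \<in> jumps C (?\<delta> M)" "x \<in> U M (c k)" if "k \<ge> k1" for k
    using mem_jumps_if_gap_floor_less[OF c(1) k0 floor_less _ M] x_in(2) that
      mem_nbhdD(4)[OF c(2) x_ne, of M]
    unfolding k1_def by (auto simp: less_imp_le)
  have "c k = c k1" if "k \<ge> k1" for k
  proof (rule ccontr)
    assume "c k \<noteq> c k1"
    with that jump U[of M] have "U M (c k) \<inter> U M (c k1) = {}"
      unfolding disjoint_open_expansion_def by auto
    with that jump show False by blast
  qed
  then show ?thesis by blast
qed

lemma Inter_nbhd_subset:
  fixes C :: "'a set" and U :: "nat \<Rightarrow> 'a \<Rightarrow> 'a set"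
  assumes closed: "closedin interval_topology C"
    and U: "\<And>n. disjoint_open_expansion interval_topology (jumps C (inverse (real (Suc n)))) (U n)"
  shows "(\<Inter>k. \<Union>c\<in>C. nbhd C U k c) \<subseteq> C"
proof
  fix x assume "x \<in> (\<Inter>k. \<Union>c\<in>C. nbhd C U k c)"
  then have "\<forall>k. \<exists>c. c \<in> C \<and> x \<in> nbhd C U k c" by blast
  then obtain c where c: "\<And>k. c k \<in> C" "\<And>k. x \<in> nbhd C U k (c k)"
    using choice[of "\<lambda>k c. c \<in> C \<and> x \<in> nbhd C U k c"] by blast
  show "x \<in> C"
  proof (rule ccontr)
    assume x: "x \<notin> C"
    then obtain k1 where const: "\<And>k. k \<ge> k1 \<Longrightarrow> c k = c k1"
      using nbhd_seq_eventually_const[OF closed U x c] by blast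
    let ?a = "c k1"
    have x_ne: "x \<noteq> c k" for k using x c(1) by metis
    note lim = mem_nbhdD(1)[OF c(2) x_ne] and x_in = mem_nbhdD(2,3)[OF c(2) x_ne]
    have "pred_sup ?a - inverse (real (Suc k)) < f x" if "k \<ge> k1" for k
      using nbhd_base[OF lim[of k], of "inverse (real (Suc k))" C] f_less[OF x_in(1)[of k]] const[OF that]
      by simp
    then have "\<forall>\<^sub>F k in sequentially. pred_sup ?a - inverse (real (Suc k)) < f x"
      unfolding eventually_sequentially by blast
    moreover have "\<forall>\<^sub>F k in sequentially. inverse (real (Suc k)) < pred_sup ?a - f x"
      using eventually_inverse_Suc_less less_pred_sup[OF lim x_in(2)] by simp
    ultimately have "\<forall>\<^sub>F k in sequentially. False"
      by eventually_elim linarith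
    then show False by simp
  qed
qed

lemma closedin_imp_gdelta_in:
  fixes C :: "'a set"
  assumes CH: "collectionwise_hausdorff (interval_topology :: 'a topology)"
    and closed: "closedin interval_topology C"
  shows "gdelta_in interval_topology C"
proof -
  let ?J = "\<lambda>n. jumps C (inverse (real (Suc n)))"
  have "\<exists>V. disjoint_open_expansion interval_topology (?J n) V" for n
  proof (rule collectionwise_hausdorffD[OF CH closedin_jumps])
    show "\<exists>V. openin interval_topology V \<and> V \<inter> ?J n = {d}" if "d \<in> ?J n" for d
      using jumps_isolated[OF that] openin_interval_topology_ioc
      by (intro exI[of _ "{gap_floor C d<..d}"] conjI)
  qed simp
  then obtain U where U: "\<And>n. disjoint_open_expansion interval_topology (?J n) (U n)"
    by metis
  have nbhd_open: "openin interval_topology (nbhd C U k c)" for k c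
  proof -
    have "openin interval_topology (if c \<in> ?J j then U j c else UNIV)" for j
      using U[of j] unfolding disjoint_open_expansion_def by auto
    then have "openin interval_topology (\<Inter>j\<le>k. if c \<in> ?J j then U j c else UNIV)"
      by (intro openin_INT2) auto
    then show ?thesis unfolding nbhd_def
      by (auto intro: openin_interval_topology_ioc openin_interval_topology_non_limit)
  qed
  have "c \<in> nbhd C U k c" for k c
    unfolding nbhd_def using U[unfolded disjoint_open_expansion_def] nbhd_base[of c "inverse (real (Suc k))" C] by auto
  then have "C = (\<Inter>k. \<Union>c\<in>C. nbhd C U k c)"
    using Inter_nbhd_subset[OF closed U] by blast
  moreover have "gdelta_in interval_topology (\<Inter>k. \<Union>c\<in>C. nbhd C U k c)"
    by (rule gdelta_in_Inter) (auto intro!: open_imp_gdelta_in nbhd_open)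
  ultimately show ?thesis by simp
qed

end

theorem corollary4p32:
  assumes "is_tree TYPE('a::order)"
    and "pseudo_sups_are_sups TYPE('a)"
    and "R_special TYPE('a)"
    and "collectionwise_hausdorff (interval_topology :: 'a topology)"
  shows "perfect_space (interval_topology :: 'a topology)"
proof -
  obtain f :: "'a \<Rightarrow> real" where "\<And>p q. p < q \<Longrightarrow> f p < f q"
    using assms(3) unfolding R_special_def by blast
  with assms(1) interpret special_tree f by unfold_locales
  show ?thesis
    unfolding perfect_space_def using closedin_imp_gdelta_in[OF assms(4)] by blast
qed

end
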